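(* If $G$ is an optimal digraph on $n$ vertices, then $\alpha_G > n/4$.
   Context: Digraphs are finite, loopless, with at most one edge $uv$ per ordered pair. A digraph is $2$-free if no distinct $u,v$ have both $uv,vu$ as edges. A circular interval digraph is a digraph together with a fixed arrangement of its vertices in a circle such that for all distinct $u,v,w$ in clockwise order with $uw\in E(G)$, also $uv,vw\in E(G)$. For distinct $u,v$, $d(u,v) = 1 + |\{w: u,w,v \text{ distinct, in clockwise order}\}|$; this is the length of the ordered pair $uv$. A non-edge is an ordered pair $(u,v)$ of distinct vertices with neither $uv$ nor $vu$ an edge; its length is $d(u,v)$. $\alpha_G$ is the minimum length of a non-edge ($\infty$ if none) and $\beta_G$ the maximum length of an edge ($0$ if none). $\xi(G)$ is the number of pairs $(uv,(w,x))$ with $uv\in E(G)$, $(w,x)$ a non-edge, $d(u,v)>d(w,x)$. $\tilde P_3(G)$ is the number of triples $(a,b,c)$ of distinct vertices with $ab,bc\in E(G)$ and $ac,ca\notin E(G)$. For fixed $n\ge 4$, $G$ is optimal if it is a $2$-free circular interval digraph on $n$ vertices maximizing $\tilde P_3$ among all such digraphs and, subject to this, minimizing $\xi(G)$. *)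

theory Defs
  imports Main "HOL-Library.Extended_Real"
begin

(* Vertices are 0..<n, placed on a circle in clockwise order 0,1,...,n-1.
   A digraph is an edge relation E :: nat => nat => bool. *)

definition cw :: "nat \<Rightarrow> nat \<Rightarrow> nat \<Rightarrow> nat \<Rightarrow> bool" where
  "cw n a b c \<longleftrightarrow> a < n \<and> b < n \<and> c < n \<and> a \<noteq> b \<and> b \<noteq> c \<and> a \<noteq> c \<and>
     (b + n - a) mod n < (c + n - a) mod n"

definition dist_cw :: "nat \<Rightarrow> nat \<Rightarrow> nat \<Rightarrow> nat" where
  "dist_cw n u v = 1 + card {w. w < n \<and> cw n u w v}"

definition is_digraph :: "nat \<Rightarrow> (nat \<Rightarrow> nat \<Rightarrow> bool) \<Rightarrow> bool" where
  "is_digraph n E \<longleftrightarrow> (\<forall>u v. E u v \<longrightarrow> u < n \<and> v < n \<and> u \<noteq> v)"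

definition two_free :: "nat \<Rightarrow> (nat \<Rightarrow> nat \<Rightarrow> bool) \<Rightarrow> bool" where
  "two_free n E \<longleftrightarrow> (\<forall>u v. u \<noteq> v \<longrightarrow> \<not> (E u v \<and> E v u))"

definition circ_interval :: "nat \<Rightarrow> (nat \<Rightarrow> nat \<Rightarrow> bool) \<Rightarrow> bool" where
  "circ_interval n E \<longleftrightarrow> (\<forall>u v w. cw n u v w \<and> E u w \<longrightarrow> E u v \<and> E v w)"

definition admissible :: "nat \<Rightarrow> (nat \<Rightarrow> nat \<Rightarrow> bool) \<Rightarrow> bool" where
  "admissible n E \<longleftrightarrow> is_digraph n E \<and> two_free n E \<and> circ_interval n E"

definition non_edge :: "nat \<Rightarrow> (nat \<Rightarrow> nat \<Rightarrow> bool) \<Rightarrow> nat \<Rightarrow> nat \<Rightarrow> bool" where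
  "non_edge n E u v \<longleftrightarrow> u < n \<and> v < n \<and> u \<noteq> v \<and> \<not> E u v \<and> \<not> E v u"

definition alphaG :: "nat \<Rightarrow> (nat \<Rightarrow> nat \<Rightarrow> bool) \<Rightarrow> ereal" where
  "alphaG n E = (if \<exists>u v. non_edge n E u v
     then ereal (real (Min {dist_cw n u v | u v. non_edge n E u v})) else \<infinity>)"

definition xi :: "nat \<Rightarrow> (nat \<Rightarrow> nat \<Rightarrow> bool) \<Rightarrow> nat" where
  "xi n E = card {((u, v), (w, x)). u < n \<and> v < n \<and> E u v \<and> non_edge n E w x \<and>
                     dist_cw n u v > dist_cw n w x}"

definition P3t :: "nat \<Rightarrow> (nat \<Rightarrow> nat \<Rightarrow> bool) \<Rightarrow> nat" where
  "P3t n E = card {(a, b, c). a < n \<and> b < n \<and> c < n \<and> a \<noteq> b \<and> b \<noteq> c \<and> a \<noteq> c \<and>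
                      E a b \<and> E b c \<and> \<not> E a c \<and> \<not> E c a}"

definition optimal :: "nat \<Rightarrow> (nat \<Rightarrow> nat \<Rightarrow> bool) \<Rightarrow> bool" where
  "optimal n E \<longleftrightarrow> admissible n E \<and>
     (\<forall>E'. admissible n E' \<longrightarrow> P3t n E' \<le> P3t n E) \<and>
     (\<forall>E'. admissible n E' \<and> P3t n E' = P3t n E \<longrightarrow> xi n E \<le> xi n E')"

end

theory Submission
  imports Defs
begin

(* Suppose not, and let (w,x) be a shortest non-edge, of length k <= n/4, and (u0,v0) a
   longest edge, of length L.  Each case yields an admissible digraph that beats G:
   - L > n/2: deleting u0v0 loses at most n - L - 1 induced paths (one per vertex of the arc
     from v0 to u0) and gains the L - 1 paths u0 -> b -> v0, so ~P3 strictly increases;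
   - L = n/2: the deletion does not decrease ~P3, but strictly decreases xi, since the
     pair (u0v0, (w,x)) stops being counted;
   - L < n/2 and k < L: adding the edge wx does not decrease ~P3 and decreases xi;
   - L < n/2 and L <= k: adding wx strictly increases ~P3 (for k = 1 after first moving
     (w,x) to a non-edge of length 1 whose tail has an in-neighbour). *)


definition offset :: "nat \<Rightarrow> nat \<Rightarrow> nat \<Rightarrow> nat" where
  "offset n u v = (if u \<le> v then v - u else v + n - u)"

lemma offset_mod:
  assumes "a < n" "b < n"
  shows "(b + n - a) mod n = offset n a b"
proof (cases "a \<le> b")
  case True
  then have "(b + n - a) mod n = (b - a) mod n"
    by (metis Nat.add_diff_assoc2 mod_add_self2)
  then show ?thesis using True assms by (simp add: offset_def)
qed (use assms in \<open>simp add: offset_def\<close>)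

lemma cw_iff_offset:
  "cw n a b c \<longleftrightarrow> a < n \<and> b < n \<and> c < n \<and> a \<noteq> b \<and> b \<noteq> c \<and> a \<noteq> c \<and>
     offset n a b < offset n a c"
  unfolding cw_def by (auto simp: offset_mod)

lemma offset_sum: "a < n \<Longrightarrow> b < n \<Longrightarrow> a \<noteq> b \<Longrightarrow> offset n a b + offset n b a = n"
  by (auto simp: offset_def)

lemma offset_bounds: "a < n \<Longrightarrow> b < n \<Longrightarrow> a \<noteq> b \<Longrightarrow> 0 < offset n a b \<and> offset n a b < n"
  by (auto simp: offset_def)

lemma offset_from_inj: "a < n \<Longrightarrow> x < n \<Longrightarrow> y < n \<Longrightarrow> offset n a x = offset n a y \<Longrightarrow> x = y"
  unfolding offset_def by (cases "a \<le> x"; cases "a \<le> y"; simp; arith)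

lemma offset_to_inj: "a < n \<Longrightarrow> x < n \<Longrightarrow> y < n \<Longrightarrow> offset n x a = offset n y a \<Longrightarrow> x = y"
  unfolding offset_def by (cases "x \<le> a"; cases "y \<le> a"; simp; arith)

lemma offset_walk: "a < n \<Longrightarrow> b < n \<Longrightarrow> (a + offset n a b) mod n = b"
  by (cases "a \<le> b") (auto simp: offset_def)

(* Offsets from a common base point a subtract: this reduces statements about cw to linear
   arithmetic on the offsets from a. *)
lemma offset_diff:
  "a < n \<Longrightarrow> b < n \<Longrightarrow> c < n \<Longrightarrow> offset n a b \<le> offset n a c \<Longrightarrow>
     offset n b c = offset n a c - offset n a b"
  unfolding offset_def by (cases "a \<le> b"; cases "a \<le> c"; cases "b \<le> c"; simp; arith)

lemma cw_offset_less: "cw n a b c \<Longrightarrow> offset n a b < offset n a c \<and> offset n b c < offset n a c"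
  using offset_diff[of a n b c] offset_bounds[of a n b] by (auto simp: cw_iff_offset)

lemma cw_cases:
  assumes "a < n" "b < n" "c < n" "a \<noteq> b" "b \<noteq> c" "a \<noteq> c"
  shows "cw n a b c \<or> cw n c b a"
proof (cases "offset n a b < offset n a c")
  case False
  then have "offset n a c < offset n a b" using offset_from_inj[of a n b c] assms by fastforce
  then have "offset n c b < offset n c a"
    using offset_diff[of a n c b] offset_sum[of a n c] offset_bounds[of a n b] assms by simp
  then show ?thesis using assms by (simp add: cw_iff_offset)
qed (use assms in \<open>simp add: cw_iff_offset\<close>)

lemma cw_rotate: "cw n a b c \<Longrightarrow> cw n b c a"
  using offset_diff[of a n b c] offset_sum[of a n b] offset_bounds[of a n c]
  by (auto simp: cw_iff_offset)

lemma cw_not_reverse: "cw n a b c \<Longrightarrow> \<not> cw n c b a"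
  using offset_diff[of a n b c] offset_sum[of b n c] offset_sum[of a n c] offset_bounds[of a n b]
    offset_diff[of c n b a]
  by (auto simp: cw_iff_offset)

lemma cw_split:
  assumes "cw n a z c" "cw n a d c" "z \<noteq> d"
  shows "cw n a z d \<or> cw n d z c"
proof (cases "offset n a z < offset n a d")
  case False
  then have "offset n a d < offset n a z"
    using offset_from_inj[of a n z d] assms by (fastforce simp: cw_iff_offset)
  then have "cw n d z c"
    using offset_diff[of a n d z] offset_diff[of a n d c] assms by (auto simp: cw_iff_offset)
  then show ?thesis ..
qed (use assms in \<open>auto simp: cw_iff_offset\<close>)


definition arc :: "nat \<Rightarrow> nat \<Rightarrow> nat \<Rightarrow> nat set" where
  "arc n a b = {z. z < n \<and> cw n a z b}"

lemma finite_arc: "finite (arc n a b)"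
  unfolding arc_def by simp

lemma card_arc: "card (arc n a b) = dist_cw n a b - 1"
  unfolding arc_def dist_cw_def by simp

(* The length of a pair is its clockwise offset: the arc corresponds to offsets 1..offset-1. *)
lemma dist_cw_offset:
  assumes "a < n" "b < n" "a \<noteq> b"
  shows "dist_cw n a b = offset n a b"
proof -
  have inj: "inj_on (offset n a) (arc n a b)"
    by (rule inj_onI) (use offset_from_inj in \<open>auto simp: arc_def cw_iff_offset\<close>)
  have "offset n a ` arc n a b = {1..<offset n a b}"
  proof
    show "offset n a ` arc n a b \<subseteq> {1..<offset n a b}"
      using offset_bounds by (fastforce simp: arc_def cw_iff_offset)
  next
    show "{1..<offset n a b} \<subseteq> offset n a ` arc n a b"
    proof
      fix i assume i: "i \<in> {1..<offset n a b}"
      define z where "z = (if a + i < n then a + i else a + i - n)"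
      have "z \<in> arc n a b" "offset n a z = i"
        using i assms unfolding z_def by (auto simp: arc_def cw_iff_offset offset_def split: if_splits)
      then show "i \<in> offset n a ` arc n a b" by force
    qed
  qed
  then have "card (arc n a b) = offset n a b - 1"
    using card_image[OF inj] by simp
  moreover have "1 \<le> offset n a b" using offset_bounds[OF assms] by simp
  ultimately show ?thesis using card_arc[of n a b] by (simp add: dist_cw_def arc_def)
qed

lemma dist_cw_pos: "1 \<le> dist_cw n a b"
  unfolding dist_cw_def by simp

lemma dist_cw_reverse: "a < n \<Longrightarrow> b < n \<Longrightarrow> a \<noteq> b \<Longrightarrow> dist_cw n b a = n - dist_cw n a b"
  using offset_sum[of a n b] by (simp add: dist_cw_offset)

lemma card_offset_from_le:
  assumes "a < n"
  shows "card {z. z < n \<and> z \<noteq> a \<and> offset n a z \<le> j} \<le> j"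
proof -
  let ?S = "{z. z < n \<and> z \<noteq> a \<and> offset n a z \<le> j}"
  have "inj_on (offset n a) ?S"
    by (rule inj_onI) (use offset_from_inj assms in blast)
  then have "card ?S = card (offset n a ` ?S)" by (simp add: card_image)
  also have "\<dots> \<le> card {1..j}"
    using offset_bounds[of a n] assms by (intro card_mono) (auto simp: Suc_le_eq)
  finally show ?thesis by simp
qed

lemma card_offset_to_le:
  assumes "a < n"
  shows "card {z. z < n \<and> z \<noteq> a \<and> offset n z a \<le> j} \<le> j"
proof -
  let ?S = "{z. z < n \<and> z \<noteq> a \<and> offset n z a \<le> j}"
  have "inj_on (\<lambda>z. offset n z a) ?S"
    by (rule inj_onI) (use offset_to_inj assms in blast)
  then have "card ?S = card ((\<lambda>z. offset n z a) ` ?S)" by (simp add: card_image)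
  also have "\<dots> \<le> card {1..j}"
    using offset_bounds[of _ n a] assms by (intro card_mono) (auto simp: Suc_le_eq)
  finally show ?thesis by simp
qed


definition cw_next :: "nat \<Rightarrow> nat \<Rightarrow> nat" where
  "cw_next n z = Suc z mod n"

lemma cw_next_eq:
  assumes "z < n"
  shows "cw_next n z = (if Suc z < n then Suc z else 0)"
proof (cases "Suc z < n")
  case False
  with assms have "Suc z = n" by simp
  then show ?thesis by (simp add: cw_next_def)
qed (simp add: cw_next_def)

lemma cw_next_offset:
  "z < n \<Longrightarrow> 2 \<le> n \<Longrightarrow> cw_next n z < n \<and> cw_next n z \<noteq> z \<and> offset n z (cw_next n z) = 1"
  by (auto simp: cw_next_eq offset_def)

lemma offset_one_cw_next: "a < n \<Longrightarrow> b < n \<Longrightarrow> offset n a b = 1 \<Longrightarrow> b = cw_next n a"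
  by (auto simp: offset_def cw_next_eq split: if_splits)

lemma cw_next_induct:
  assumes "a < n" "b < n" and base: "P a" and step: "\<And>z. z < n \<Longrightarrow> P z \<Longrightarrow> P (cw_next n z)"
  shows "P b"
proof -
  have "P ((a + j) mod n)" for j
  proof (induction j)
    case (Suc j)
    have "(a + Suc j) mod n = cw_next n ((a + j) mod n)"
      by (simp add: cw_next_def mod_Suc_eq)
    then show ?case using step[OF _ Suc] assms(1) by simp
  qed (use assms base in simp)
  from this[of "offset n a b"] show ?thesis using offset_walk assms by simp
qed

lemma cw_next_chain_breaks:
  assumes "a < n" "b < n" "R a (cw_next n a)" "\<not> R b (cw_next n b)"
  shows "\<exists>z<n. R z (cw_next n z) \<and> \<not> R (cw_next n z) (cw_next n (cw_next n z))"
  using cw_next_induct[of a n b "\<lambda>z. R z (cw_next n z)"] assms by blast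



definition P3_set :: "nat \<Rightarrow> (nat \<Rightarrow> nat \<Rightarrow> bool) \<Rightarrow> (nat \<times> nat \<times> nat) set" where
  "P3_set n E = {(a, b, c). a < n \<and> b < n \<and> c < n \<and> a \<noteq> b \<and> b \<noteq> c \<and> a \<noteq> c \<and>
                      E a b \<and> E b c \<and> \<not> E a c \<and> \<not> E c a}"

lemma P3t_card: "P3t n E = card (P3_set n E)"
  unfolding P3t_def P3_set_def by simp

lemma finite_P3_set: "finite (P3_set n E)"
proof -
  have "P3_set n E \<subseteq> {..<n} \<times> {..<n} \<times> {..<n}" unfolding P3_set_def by auto
  then show ?thesis by (rule finite_subset) simp
qed

definition xi_set :: "nat \<Rightarrow> (nat \<Rightarrow> nat \<Rightarrow> bool) \<Rightarrow> ((nat \<times> nat) \<times> (nat \<times> nat)) set" where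
  "xi_set n E = {((u, v), (w, x)). u < n \<and> v < n \<and> E u v \<and> non_edge n E w x \<and>
                     dist_cw n u v > dist_cw n w x}"

lemma xi_card: "xi n E = card (xi_set n E)"
  unfolding xi_def xi_set_def by simp

lemma finite_xi_set: "finite (xi_set n E)"
proof -
  have "xi_set n E \<subseteq> ({..<n} \<times> {..<n}) \<times> ({..<n} \<times> {..<n})"
    unfolding xi_set_def non_edge_def by auto
  then show ?thesis by (rule finite_subset) simp
qed

lemma shortest_non_edge_exists:
  assumes "non_edge n E w x"
  obtains w0 x0 where "non_edge n E w0 x0"
    "\<And>a b. non_edge n E a b \<Longrightarrow> dist_cw n w0 x0 \<le> dist_cw n a b"
  using ex_has_least_nat[of "\<lambda>p. non_edge n E (fst p) (snd p)" "(w, x)"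
      "\<lambda>p. dist_cw n (fst p) (snd p)"] assms
  by auto

lemma alphaG_shortest:
  assumes "non_edge n E w x" "\<And>a b. non_edge n E a b \<Longrightarrow> dist_cw n w x \<le> dist_cw n a b"
  shows "alphaG n E = ereal (real (dist_cw n w x))"
proof -
  have "{dist_cw n u v | u v. non_edge n E u v} \<subseteq> (\<lambda>(u, v). dist_cw n u v) ` ({..<n} \<times> {..<n})"
    unfolding non_edge_def by auto
  then have "finite {dist_cw n u v | u v. non_edge n E u v}" by (rule finite_subset) simp
  then have "Min {dist_cw n u v | u v. non_edge n E u v} = dist_cw n w x"
    by (rule Min_eqI) (use assms in auto)
  then show ?thesis using assms(1) unfolding alphaG_def by auto
qed

lemma card_exchange:
  assumes "finite A" "finite B" "finite X" "A - B \<subseteq> X" "Y \<subseteq> B - A"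
  shows "card A + card Y \<le> card B + card X"
proof -
  have "card A = card (A \<inter> B) + card (A - B)" using card_Int_Diff[OF assms(1)] .
  moreover have "card B = card (A \<inter> B) + card (B - A)"
    using card_Int_Diff[OF assms(2), of A] by (simp add: Int_commute)
  moreover have "card (A - B) \<le> card X" using assms by (simp add: card_mono)
  moreover have "card Y \<le> card (B - A)" using assms by (simp add: card_mono)
  ultimately show ?thesis by linarith
qed


locale circ_digraph =
  fixes n :: nat and E :: "nat \<Rightarrow> nat \<Rightarrow> bool"
  assumes admissible: "admissible n E"
begin

lemma edge_vertices: "E u v \<Longrightarrow> u < n \<and> v < n \<and> u \<noteq> v"
  using admissible unfolding admissible_def is_digraph_def by blast

lemma edge_asym: "E u v \<Longrightarrow> \<not> E v u"
  using admissible edge_vertices unfolding admissible_def two_free_def by blast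

lemma edge_interval: "cw n u v w \<Longrightarrow> E u w \<Longrightarrow> E u v \<and> E v w"
  using admissible unfolding admissible_def circ_interval_def by blast

lemma dist_edge: "E u v \<Longrightarrow> dist_cw n u v = offset n u v"
  using edge_vertices dist_cw_offset by blast

lemma interval_edges_shorter:
  assumes "cw n u v w" "E u w"
  shows "dist_cw n u v < dist_cw n u w \<and> dist_cw n v w < dist_cw n u w"
proof -
  have "E u v" "E v w" using edge_interval[OF assms] by auto
  then show ?thesis using cw_offset_less[OF assms(1)] dist_edge assms(2) by simp
qed

lemma out_neighbour_cw:
  assumes "E u z" "\<not> E u x" "x < n" "x \<noteq> u"
  shows "cw n u z x"
proof (rule ccontr)
  assume "\<not> cw n u z x"
  moreover have "u < n" "z < n" "z \<noteq> u" "z \<noteq> x" using edge_vertices[OF assms(1)] assms by auto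
  ultimately have "cw n x z u" using cw_cases[of u n z x] assms by auto
  then have "cw n u x z" using cw_rotate by blast
  then show False using edge_interval assms by blast
qed

lemma in_neighbour_cw:
  assumes "E z v" "\<not> E x v" "x < n" "x \<noteq> v"
  shows "cw n x z v"
proof (rule ccontr)
  assume "\<not> cw n x z v"
  moreover have "v < n" "z < n" "z \<noteq> v" "z \<noteq> x" using edge_vertices[OF assms(1)] assms by auto
  ultimately have "cw n v z x" using cw_cases[of x n z v] assms by auto
  then have "cw n z x v" using cw_rotate by blast
  then show False using edge_interval assms by blast
qed

abbreviation in_nbrs :: "nat \<Rightarrow> nat set" where "in_nbrs v \<equiv> {p. E p v}"
abbreviation out_nbrs :: "nat \<Rightarrow> nat set" where "out_nbrs u \<equiv> {d. E u d}"

lemma finite_in_nbrs: "finite (in_nbrs v)"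
  by (rule finite_subset[of _ "{..<n}"]) (use edge_vertices in auto)

lemma finite_out_nbrs: "finite (out_nbrs u)"
  by (rule finite_subset[of _ "{..<n}"]) (use edge_vertices in auto)

lemma card_in_nbrs_le:
  assumes "\<And>a b. E a b \<Longrightarrow> dist_cw n a b \<le> L" "v < n"
  shows "card (in_nbrs v) \<le> L"
proof -
  have "in_nbrs v \<subseteq> {z. z < n \<and> z \<noteq> v \<and> offset n z v \<le> L}"
    using edge_vertices assms(1) dist_edge by fastforce
  then have "card (in_nbrs v) \<le> card {z. z < n \<and> z \<noteq> v \<and> offset n z v \<le> L}"
    by (intro card_mono) auto
  then show ?thesis using card_offset_to_le[OF assms(2), of L] by linarith
qed

lemma card_out_nbrs_le:
  assumes "\<And>a b. E a b \<Longrightarrow> dist_cw n a b \<le> L" "u < n"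
  shows "card (out_nbrs u) \<le> L"
proof -
  have "out_nbrs u \<subseteq> {z. z < n \<and> z \<noteq> u \<and> offset n u z \<le> L}"
    using edge_vertices assms(1) dist_edge by fastforce
  then have "card (out_nbrs u) \<le> card {z. z < n \<and> z \<noteq> u \<and> offset n u z \<le> L}"
    by (intro card_mono) auto
  then show ?thesis using card_offset_from_le[OF assms(2), of L] by linarith
qed

lemma longest_edge_exists:
  assumes "E u v"
  obtains u0 v0 where "E u0 v0" "\<And>a b. E a b \<Longrightarrow> dist_cw n a b \<le> dist_cw n u0 v0"
proof -
  have "\<exists>p. E (fst p) (snd p) \<and>
      (\<forall>q. E (fst q) (snd q) \<longrightarrow> dist_cw n (fst q) (snd q) \<le> dist_cw n (fst p) (snd p))"
    by (rule Lattices_Big.ex_has_greatest_nat[where k = "(u, v)" and b = n])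
      (use assms edge_vertices dist_edge offset_bounds in auto)
  then show ?thesis using that by auto
qed

end


locale longest_edge = circ_digraph +
  fixes u0 v0 :: nat
  assumes edge: "E u0 v0"
    and longest: "\<And>a b. E a b \<Longrightarrow> dist_cw n a b \<le> dist_cw n u0 v0"
begin

definition E_rem :: "nat \<Rightarrow> nat \<Rightarrow> bool" where
  "E_rem a b \<longleftrightarrow> E a b \<and> (a, b) \<noteq> (u0, v0)"

lemma u0v0: "u0 < n" "v0 < n" "u0 \<noteq> v0"
  using edge_vertices[OF edge] by auto

(* A longest edge is never split by an interior vertex of another edge, so deleting it
   preserves the circular interval property. *)
lemma removal_admissible: "admissible n E_rem"
  unfolding admissible_def is_digraph_def two_free_def circ_interval_def
proof (intro conjI; intro allI impI)
  fix u v assume "E_rem u v"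
  then show "u < n \<and> v < n \<and> u \<noteq> v" using edge_vertices unfolding E_rem_def by blast
next
  fix u v :: nat
  show "\<not> (E_rem u v \<and> E_rem v u)" using edge_asym unfolding E_rem_def by blast
next
  fix u v w assume "cw n u v w \<and> E_rem u w"
  then have c: "cw n u v w" and e: "E u w" unfolding E_rem_def by auto
  have "dist_cw n u v < dist_cw n u0 v0" "dist_cw n v w < dist_cw n u0 v0"
    using interval_edges_shorter[OF c e] longest[OF e] by auto
  then show "E_rem u v \<and> E_rem v w" using edge_interval[OF c e] unfolding E_rem_def by auto
qed

lemma removal_lost_paths:
  "P3_set n E - P3_set n E_rem \<subseteq>
     (\<lambda>c. (u0, v0, c)) ` (out_nbrs v0 - in_nbrs u0) \<union> (\<lambda>a. (a, u0, v0)) ` (in_nbrs u0 - out_nbrs v0)"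
proof
  fix t assume t: "t \<in> P3_set n E - P3_set n E_rem"
  obtain a b c where abc: "t = (a, b, c)" by (cases t) auto
  from t abc have path: "a < n \<and> b < n \<and> c < n \<and> a \<noteq> b \<and> b \<noteq> c \<and> a \<noteq> c \<and>
      E a b \<and> E b c \<and> \<not> E a c \<and> \<not> E c a"
    and "\<not> (E_rem a b \<and> E_rem b c \<and> \<not> E_rem a c \<and> \<not> E_rem c a)"
    unfolding P3_set_def by auto
  then have "(a, b) = (u0, v0) \<or> (b, c) = (u0, v0)" unfolding E_rem_def by auto
  then show "t \<in> (\<lambda>c. (u0, v0, c)) ` (out_nbrs v0 - in_nbrs u0) \<union>
      (\<lambda>a. (a, u0, v0)) ` (in_nbrs u0 - out_nbrs v0)"
    using path abc by auto
qed

lemma removal_new_paths: "(\<lambda>b. (u0, b, v0)) ` arc n u0 v0 \<subseteq> P3_set n E_rem - P3_set n E"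
proof
  fix t assume "t \<in> (\<lambda>b. (u0, b, v0)) ` arc n u0 v0"
  then obtain b where c: "cw n u0 b v0" and t: "t = (u0, b, v0)" unfolding arc_def by auto
  have "E u0 b \<and> E b v0" using edge_interval[OF c edge] .
  moreover have "b < n" "b \<noteq> u0" "b \<noteq> v0" using c by (auto simp: cw_iff_offset)
  ultimately show "t \<in> P3_set n E_rem - P3_set n E"
    using t u0v0 edge edge_asym[OF edge] unfolding P3_set_def E_rem_def by auto
qed

lemma neighbours_on_arc: "in_nbrs u0 \<union> out_nbrs v0 \<subseteq> arc n v0 u0"
  using in_neighbour_cw[of _ u0 v0] out_neighbour_cw[of v0 _ u0] edge_asym[OF edge] u0v0
    edge_vertices
  unfolding arc_def by blast

lemma removal_P3:
  "card (P3_set n E) + (dist_cw n u0 v0 - 1) \<le> card (P3_set n E_rem) + (dist_cw n v0 u0 - 1)"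
proof -
  let ?I = "in_nbrs u0" and ?O = "out_nbrs v0"
  let ?lost = "(\<lambda>c. (u0, v0, c)) ` (?O - ?I) \<union> (\<lambda>a. (a, u0, v0)) ` (?I - ?O)"
  let ?new = "(\<lambda>b. (u0, b, v0)) ` arc n u0 v0"
  have "card ?lost \<le> card (?O - ?I) + card (?I - ?O)"
    by (rule order_trans[OF card_Un_le add_mono[OF card_image_le card_image_le]])
      (simp_all add: finite_in_nbrs finite_out_nbrs)
  also have "\<dots> = card ((?O - ?I) \<union> (?I - ?O))"
    by (rule card_Un_disjoint[symmetric]) (auto simp: finite_in_nbrs finite_out_nbrs)
  also have "\<dots> \<le> card (arc n v0 u0)"
    using neighbours_on_arc by (intro card_mono finite_arc) auto
  finally have lost: "card ?lost \<le> dist_cw n v0 u0 - 1" by (simp add: card_arc)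
  have "inj_on (\<lambda>b. (u0, b, v0)) (arc n u0 v0)" by (rule inj_onI) auto
  then have new: "card ?new = dist_cw n u0 v0 - 1" by (simp add: card_image card_arc)
  have "card (P3_set n E) + card ?new \<le> card (P3_set n E_rem) + card ?lost"
    by (rule card_exchange[OF finite_P3_set finite_P3_set _ removal_lost_paths removal_new_paths])
      (simp add: finite_in_nbrs finite_out_nbrs)
  then show ?thesis using lost new by linarith
qed

(* If the deleted edge has length at most n/2, the deletion creates no non-edge shorter than
   it; so xi drops as soon as some non-edge (w,x) is shorter than u0v0. *)
lemma removal_xi:
  assumes half: "2 * dist_cw n u0 v0 \<le> n"
    and ne: "non_edge n E w x" and shorter: "dist_cw n w x < dist_cw n u0 v0"
  shows "xi n E_rem < xi n E"
proof -
  have "xi_set n E_rem \<subseteq> xi_set n E"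
  proof
    fix t assume t: "t \<in> xi_set n E_rem"
    obtain u v a b where t': "t = ((u, v), (a, b))" by (cases t) auto
    from t t' have h: "u < n" "v < n" "E u v" "non_edge n E_rem a b"
        "dist_cw n a b < dist_cw n u v"
      unfolding xi_set_def E_rem_def by auto
    have "non_edge n E a b"
    proof (rule ccontr)
      assume "\<not> non_edge n E a b"
      then have "(a, b) = (u0, v0) \<or> (b, a) = (u0, v0)"
        using h(4) unfolding non_edge_def E_rem_def by auto
      then have "dist_cw n u0 v0 \<le> dist_cw n a b" using dist_cw_reverse[OF u0v0] half by auto
      then show False using longest[OF h(3)] h(5) by simp
    qed
    then show "t \<in> xi_set n E" using t' h unfolding xi_set_def by auto
  qed
  moreover have "((u0, v0), (w, x)) \<in> xi_set n E - xi_set n E_rem"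
    using edge ne shorter u0v0 unfolding xi_set_def E_rem_def by auto
  ultimately have "xi_set n E_rem \<subset> xi_set n E" by blast
  then show ?thesis unfolding xi_card by (rule psubset_card_mono[OF finite_xi_set])
qed

end


locale shortest_non_edge = circ_digraph +
  fixes w x k L :: nat
  assumes wx_non_edge: "non_edge n E w x" and length: "dist_cw n w x = k"
    and shortest: "\<And>a b. non_edge n E a b \<Longrightarrow> k \<le> dist_cw n a b"
    and edges_le: "\<And>a b. E a b \<Longrightarrow> dist_cw n a b \<le> L"
    and less_half: "2 * L < n" and quarter: "4 * k \<le> n"
begin

definition E_add :: "nat \<Rightarrow> nat \<Rightarrow> bool" where
  "E_add a b \<longleftrightarrow> E a b \<or> (a = w \<and> b = x)"

lemma wx: "w < n" "x < n" "w \<noteq> x" "\<not> E w x" "\<not> E x w"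
  using wx_non_edge unfolding non_edge_def by auto

lemma offset_wx: "offset n w x = k"
  using length dist_cw_offset wx by simp

lemma k_pos: "1 \<le> k"
  using length dist_cw_pos by metis

(* Every pair at offset less than k is an edge: it is no non-edge by minimality of k, and no
   reverse edge, as that edge would have length greater than n - k > L. *)
lemma short_pairs_edges:
  assumes "a < n" "b < n" "a \<noteq> b" "offset n a b < k"
  shows "E a b"
proof (rule ccontr)
  assume nab: "\<not> E a b"
  show False
  proof (cases "E b a")
    case True
    then have "offset n b a \<le> L" using edges_le dist_edge by fastforce
    then show False using offset_sum[OF assms(1-3)] assms(4) less_half quarter by linarith
  next
    case False
    then have "non_edge n E a b" using nab assms unfolding non_edge_def by auto
    then show False using shortest dist_cw_offset assms by fastforce
  qed
qed

lemma arc_edges: "cw n w b x \<Longrightarrow> E w b \<and> E b x"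
  using cw_offset_less[of n w b x] offset_wx short_pairs_edges by (auto simp: cw_iff_offset)

lemma addition_admissible: "admissible n E_add"
  unfolding admissible_def is_digraph_def two_free_def circ_interval_def
proof (intro conjI; intro allI impI)
  fix u v assume "E_add u v"
  then show "u < n \<and> v < n \<and> u \<noteq> v" using edge_vertices wx unfolding E_add_def by blast
next
  fix u v :: nat
  show "\<not> (E_add u v \<and> E_add v u)" using edge_asym wx unfolding E_add_def by blast
next
  fix u v z assume "cw n u v z \<and> E_add u z"
  then show "E_add u v \<and> E_add v z" using edge_interval arc_edges unfolding E_add_def by blast
qed

lemma in_nbrs_w_cw: "E p w \<Longrightarrow> cw n x p w"
  using in_neighbour_cw wx by blast

lemma out_nbrs_x_cw: "E x d \<Longrightarrow> cw n x d w"
  using out_neighbour_cw wx by blast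

lemma addition_lost_paths:
  "P3_set n E - P3_set n E_add \<subseteq>
     (\<lambda>b. (w, b, x)) ` arc n w x \<union> (\<lambda>b. (x, b, w)) ` (in_nbrs w \<inter> out_nbrs x)"
proof
  fix t assume t: "t \<in> P3_set n E - P3_set n E_add"
  obtain a b c where abc: "t = (a, b, c)" by (cases t) auto
  from t abc have path: "a < n \<and> b < n \<and> c < n \<and> a \<noteq> b \<and> b \<noteq> c \<and> a \<noteq> c \<and>
      E a b \<and> E b c \<and> \<not> E a c \<and> \<not> E c a"
    and "\<not> (E_add a b \<and> E_add b c \<and> \<not> E_add a c \<and> \<not> E_add c a)"
    unfolding P3_set_def by auto
  then have "(a = w \<and> c = x) \<or> (a = x \<and> c = w)" unfolding E_add_def by auto
  then show "t \<in> (\<lambda>b. (w, b, x)) ` arc n w x \<union> (\<lambda>b. (x, b, w)) ` (in_nbrs w \<inter> out_nbrs x)"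
  proof
    assume ac: "a = w \<and> c = x"
    then have "b \<in> arc n w x" using out_neighbour_cw[of w b x] wx path unfolding arc_def by auto
    then show ?thesis using ac abc by auto
  qed (use path abc in auto)
qed

lemma addition_new_paths:
  "(\<lambda>p. (p, w, x)) ` (in_nbrs w - out_nbrs x) \<union> (\<lambda>d. (w, x, d)) ` (out_nbrs x - in_nbrs w)
     \<subseteq> P3_set n E_add - P3_set n E"
proof (intro Un_least image_subsetI)
  fix p assume p: "p \<in> in_nbrs w - out_nbrs x"
  then have c: "cw n p w x" using in_nbrs_w_cw cw_rotate by blast
  then have "\<not> E p x" using edge_interval wx by blast
  moreover have "p < n" "p \<noteq> w" "p \<noteq> x" using c by (auto simp: cw_iff_offset)
  ultimately show "(p, w, x) \<in> P3_set n E_add - P3_set n E"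
    using p wx unfolding P3_set_def E_add_def by auto
next
  fix d assume d: "d \<in> out_nbrs x - in_nbrs w"
  then have c: "cw n x d w" using out_nbrs_x_cw by blast
  then have "\<not> E w d" using out_neighbour_cw[of w d x] wx cw_not_reverse by blast
  moreover have "d < n" "d \<noteq> w" "d \<noteq> x" using c by (auto simp: cw_iff_offset)
  ultimately show "(w, x, d) \<in> P3_set n E_add - P3_set n E"
    using d wx unfolding P3_set_def E_add_def by auto
qed

lemma addition_balance:
  "card (P3_set n E) + card (in_nbrs w - out_nbrs x) + card (out_nbrs x - in_nbrs w) + 1
     \<le> card (P3_set n E_add) + k + card (in_nbrs w \<inter> out_nbrs x)"
proof -
  let ?I = "in_nbrs w" and ?O = "out_nbrs x"
  let ?lost = "(\<lambda>b. (w, b, x)) ` arc n w x \<union> (\<lambda>b. (x, b, w)) ` (?I \<inter> ?O)"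
  let ?new = "(\<lambda>p. (p, w, x)) ` (?I - ?O) \<union> (\<lambda>d. (w, x, d)) ` (?O - ?I)"
  have "card ?lost \<le> card (arc n w x) + card (?I \<inter> ?O)"
    by (rule order_trans[OF card_Un_le add_mono[OF card_image_le card_image_le]])
      (simp_all add: finite_arc finite_in_nbrs)
  then have lost: "card ?lost + 1 \<le> k + card (?I \<inter> ?O)"
    using card_arc[of n w x] length k_pos by simp
  have "card ?new = card ((\<lambda>p. (p, w, x)) ` (?I - ?O)) + card ((\<lambda>d. (w, x, d)) ` (?O - ?I))"
    using wx by (intro card_Un_disjoint) (auto simp: finite_in_nbrs finite_out_nbrs)
  also have "\<dots> = card (?I - ?O) + card (?O - ?I)"
    by (simp add: card_image inj_on_def)
  finally have new: "card ?new = card (?I - ?O) + card (?O - ?I)" .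
  have "card (P3_set n E) + card ?new \<le> card (P3_set n E_add) + card ?lost"
    by (rule card_exchange[OF finite_P3_set finite_P3_set _ addition_lost_paths addition_new_paths])
      (simp add: finite_arc finite_in_nbrs)
  then show ?thesis using lost new by linarith
qed

(* The k - 1 vertices just before w are in-neighbours of w. *)
lemma card_in_nbrs_w_ge: "k \<le> card (in_nbrs w) + 1"
proof -
  define q where "q = (if k \<le> w then w - k else w + n - k)"
  have "k < n" using quarter k_pos by linarith
  then have q: "q < n" "q \<noteq> w" "offset n q w = k"
    using k_pos wx unfolding q_def offset_def by auto
  have "arc n q w \<subseteq> in_nbrs w"
  proof
    fix b assume "b \<in> arc n q w"
    then have c: "cw n q b w" unfolding arc_def by auto
    then have "offset n b w < k" using cw_offset_less q by fastforce
    then show "b \<in> in_nbrs w" using short_pairs_edges c by (auto simp: cw_iff_offset)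
  qed
  then have "card (arc n q w) \<le> card (in_nbrs w)" by (rule card_mono[OF finite_in_nbrs])
  moreover have "card (arc n q w) + 1 = k" using card_arc dist_cw_offset q wx(1) k_pos by simp
  ultimately show ?thesis by linarith
qed

lemma addition_P3_disjoint:
  assumes "in_nbrs w \<inter> out_nbrs x = {}"
  shows "card (P3_set n E) + card (in_nbrs w) + card (out_nbrs x) + 1 \<le> card (P3_set n E_add) + k"
proof -
  have "in_nbrs w - out_nbrs x = in_nbrs w" "out_nbrs x - in_nbrs w = out_nbrs x" using assms by auto
  then show ?thesis using addition_balance assms by simp
qed

lemma common_nbr_covers_arc:
  assumes "in_nbrs w \<inter> out_nbrs x \<noteq> {}"
  shows "in_nbrs w \<union> out_nbrs x = arc n x w"
proof
  show "in_nbrs w \<union> out_nbrs x \<subseteq> arc n x w"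
    using in_nbrs_w_cw out_nbrs_x_cw by (auto simp: arc_def cw_iff_offset)
  obtain d where d: "E d w" "E x d" using assms by blast
  show "arc n x w \<subseteq> in_nbrs w \<union> out_nbrs x"
  proof
    fix z assume "z \<in> arc n x w"
    then have cz: "cw n x z w" unfolding arc_def by auto
    show "z \<in> in_nbrs w \<union> out_nbrs x"
    proof (cases "z = d")
      case False
      then have "cw n x z d \<or> cw n d z w" using cw_split[OF cz out_nbrs_x_cw[OF d(2)]] by blast
      then show ?thesis using edge_interval d by blast
    qed (use d in auto)
  qed
qed

(* With a common neighbour, |I| + |O| = n - k - 1 + |I \<inter> O|; since |I|, |O| <= L < n/2
   this forces |I \<inter> O| <= k, which keeps the balance nonnegative, and k < L. *)
lemma addition_P3_common:
  assumes "in_nbrs w \<inter> out_nbrs x \<noteq> {}"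
  shows "card (P3_set n E) \<le> card (P3_set n E_add)" and "k < L"
proof -
  let ?I = "in_nbrs w" and ?O = "out_nbrs x"
  have "card (arc n x w) + k + 1 = n"
    using card_arc[of n x w] dist_cw_offset[of x n w] offset_sum[of w n x] offset_wx
      offset_bounds[of x n w] wx by simp
  then have "card ?I + card ?O = n - k - 1 + card (?I \<inter> ?O)"
    using card_Un_Int[OF finite_in_nbrs finite_out_nbrs] common_nbr_covers_arc[OF assms] by simp
  moreover have "card ?I = card (?I - ?O) + card (?I \<inter> ?O)"
    using card_Int_Diff[OF finite_in_nbrs[of w], of ?O] by (simp add: add.commute)
  moreover have "card ?O = card (?O - ?I) + card (?I \<inter> ?O)"
    using card_Int_Diff[OF finite_out_nbrs[of x], of ?I] by (metis Int_commute add.commute)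
  moreover have "card ?I \<le> L" "card ?O \<le> L"
    using card_in_nbrs_le card_out_nbrs_le edges_le wx by auto
  moreover have "1 \<le> card (?I \<inter> ?O)"
    using assms finite_in_nbrs by (simp add: Suc_le_eq card_gt_0_iff)
  ultimately show "card (P3_set n E) \<le> card (P3_set n E_add)" and "k < L"
    using addition_balance less_half quarter k_pos by linarith+
qed

lemma addition_P3: "card (P3_set n E) \<le> card (P3_set n E_add)"
proof (cases "in_nbrs w \<inter> out_nbrs x = {}")
  case True
  then show ?thesis using addition_P3_disjoint card_in_nbrs_w_ge by fastforce
qed (rule addition_P3_common(1))

(* If L <= k there is no common neighbour, and adding wx strictly increases ~P3 as soon as
   w and x have k neighbours together: this holds if k >= 2 (the successor of x is an
   out-neighbour of x) or if w has an in-neighbour (then k = 1 suffices). *)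
lemma addition_P3_strict:
  assumes "L \<le> k" and "2 \<le> k \<or> in_nbrs w \<noteq> {}"
  shows "card (P3_set n E) < card (P3_set n E_add)"
proof -
  have disjoint: "in_nbrs w \<inter> out_nbrs x = {}"
    using addition_P3_common(2) assms(1) by fastforce
  have "k \<le> card (in_nbrs w) + card (out_nbrs x)"
  proof (cases "2 \<le> k")
    case True
    then have "cw_next n x < n" "cw_next n x \<noteq> x" "offset n x (cw_next n x) = 1"
      using cw_next_offset[of x n] wx quarter by auto
    then have "E x (cw_next n x)" using short_pairs_edges wx True by auto
    then have "1 \<le> card (out_nbrs x)"
      using finite_out_nbrs by (auto simp: Suc_le_eq card_gt_0_iff)
    then show ?thesis using card_in_nbrs_w_ge by linarith
  next
    case False
    then have "1 \<le> card (in_nbrs w)"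
      using assms(2) finite_in_nbrs by (simp add: Suc_le_eq card_gt_0_iff)
    then show ?thesis using False k_pos by linarith
  qed
  then show ?thesis using addition_P3_disjoint[OF disjoint] by linarith
qed

(* Adding wx only removes pairs from the count xi, and removes the pair (u0v0, (w,x)) for
   every edge u0v0 longer than k. *)
lemma addition_xi:
  assumes e: "E u0 v0" and longer: "k < dist_cw n u0 v0"
  shows "xi n E_add < xi n E"
proof -
  have "xi_set n E_add \<subseteq> xi_set n E"
  proof
    fix t assume t: "t \<in> xi_set n E_add"
    obtain u v a b where t': "t = ((u, v), (a, b))" by (cases t) auto
    from t t' have h: "u < n" "v < n" "E_add u v" "non_edge n E_add a b"
        "dist_cw n a b < dist_cw n u v"
      unfolding xi_set_def by auto
    have ne: "non_edge n E a b" using h(4) unfolding non_edge_def E_add_def by auto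
    have "E u v"
    proof (rule ccontr)
      assume "\<not> E u v"
      then have "u = w" "v = x" using h(3) unfolding E_add_def by auto
      then show False using h(5) length shortest[OF ne] by simp
    qed
    then show "t \<in> xi_set n E" using t' h ne unfolding xi_set_def by auto
  qed
  moreover have "((u0, v0), (w, x)) \<in> xi_set n E - xi_set n E_add"
    using e wx_non_edge longer length edge_vertices[OF e] unfolding xi_set_def non_edge_def E_add_def
    by auto
  ultimately have "xi_set n E_add \<subset> xi_set n E" by blast
  then show ?thesis unfolding xi_card by (rule psubset_card_mono[OF finite_xi_set])
qed

end


context circ_digraph
begin

(* If every edge has length 1 and some non-edge has length 1, some non-edge of length 1 has
   a tail with an in-neighbour: walking clockwise from an edge z -> z+1, the chain of such
   edges must break, and where it breaks, (z+1, z+2) is a non-edge. *)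
lemma unit_non_edge_with_in_nbr:
  assumes unit: "\<And>a b. E a b \<Longrightarrow> dist_cw n a b \<le> 1" and "2 < n" and "E u v"
    and "non_edge n E w x" and "dist_cw n w x = 1"
  shows "\<exists>y y'. in_nbrs y \<noteq> {} \<and> non_edge n E y y' \<and> dist_cw n y y' = 1"
proof -
  have uv: "u < n" "v < n" "u \<noteq> v" using edge_vertices[OF \<open>E u v\<close>] by auto
  then have "offset n u v = 1"
    using unit[OF \<open>E u v\<close>] dist_edge[OF \<open>E u v\<close>] offset_bounds[OF uv] by simp
  then have "E u (cw_next n u)" using offset_one_cw_next uv \<open>E u v\<close> by metis
  moreover have wx: "w < n" "x < n" "w \<noteq> x" "\<not> E w x"
    using \<open>non_edge n E w x\<close> unfolding non_edge_def by auto
  moreover have "x = cw_next n w"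
    using offset_one_cw_next dist_cw_offset wx \<open>dist_cw n w x = 1\<close> by metis
  ultimately have "\<exists>z<n. E z (cw_next n z) \<and> \<not> E (cw_next n z) (cw_next n (cw_next n z))"
    using cw_next_chain_breaks[of u n w E] uv by simp
  then obtain z where z: "z < n" "E z (cw_next n z)" "\<not> E (cw_next n z) (cw_next n (cw_next n z))"
    by blast
  let ?y = "cw_next n z"
  let ?y' = "cw_next n ?y"
  have y: "?y < n" "?y' < n" "?y' \<noteq> ?y" "offset n ?y ?y' = 1"
    using cw_next_offset[of z n] cw_next_offset[of ?y n] z(1) \<open>2 < n\<close> by auto
  then have d: "dist_cw n ?y ?y' = 1" using dist_cw_offset by simp
  have "\<not> E ?y' ?y"
  proof
    assume "E ?y' ?y"
    then have "dist_cw n ?y' ?y \<le> 1" by (rule unit)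
    moreover have "dist_cw n ?y' ?y = n - 1" using dist_cw_reverse[of ?y n ?y'] y d by simp
    ultimately show False using \<open>2 < n\<close> by simp
  qed
  then have "non_edge n E ?y ?y'" using z(3) y unfolding non_edge_def by simp
  moreover have "in_nbrs ?y \<noteq> {}" using z(2) by blast
  ultimately show ?thesis using d by blast
qed

end



locale optimal_digraph =
  fixes n :: nat and E :: "nat \<Rightarrow> nat \<Rightarrow> bool"
  assumes four: "4 \<le> n" and optimal: "optimal n E"
begin

sublocale circ_digraph n E
  using optimal unfolding optimal_def by unfold_locales blast

lemma no_better:
  assumes "admissible n E'"
  shows "card (P3_set n E') \<le> card (P3_set n E)"
    and "card (P3_set n E) \<le> card (P3_set n E') \<Longrightarrow> xi n E \<le> xi n E'"
proof -
  show le: "card (P3_set n E') \<le> card (P3_set n E)"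
    using optimal assms unfolding optimal_def P3t_card by blast
  assume "card (P3_set n E) \<le> card (P3_set n E')"
  with le have "P3t n E' = P3t n E" unfolding P3t_card by simp
  then show "xi n E \<le> xi n E'" using optimal assms unfolding optimal_def by blast
qed

(* The path 0 -> 1 -> 2 is admissible and has an induced 2-path, so E has edges. *)
lemma has_edge: "\<exists>u v. E u v"
proof (rule ccontr)
  assume "\<not> (\<exists>u v. E u v)"
  then have empty: "P3_set n E = {}" unfolding P3_set_def by auto
  define E2 :: "nat \<Rightarrow> nat \<Rightarrow> bool" where "E2 = (\<lambda>a b. (a = 0 \<and> b = 1) \<or> (a = 1 \<and> b = 2))"
  have adm: "admissible n E2"
    unfolding admissible_def is_digraph_def two_free_def circ_interval_def E2_def
    using four by (auto simp: cw_iff_offset offset_def)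
  have "(0, 1, 2) \<in> P3_set n E2" using four unfolding P3_set_def E2_def by auto
  then have "0 < card (P3_set n E2)" using finite_P3_set card_gt_0_iff by blast
  then show False using no_better(1)[OF adm] empty by simp
qed

(* A longest edge has length at most n/2: otherwise deleting it increases ~P3. *)
lemma longest_edge_at_most_half:
  assumes "E u0 v0" "\<And>a b. E a b \<Longrightarrow> dist_cw n a b \<le> dist_cw n u0 v0"
  shows "2 * dist_cw n u0 v0 \<le> n"
proof (rule ccontr)
  assume long: "\<not> ?thesis"
  interpret longest_edge n E u0 v0 using assms by unfold_locales
  have "dist_cw n v0 u0 = n - dist_cw n u0 v0" using dist_cw_reverse[OF u0v0] .
  then have "card (P3_set n E) < card (P3_set n E_rem)"
    using removal_P3 long dist_cw_pos[of n u0 v0] four by arith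
  then show False using no_better(1)[OF removal_admissible] by simp
qed

(* If the longest edge has length exactly n/2, no non-edge is shorter: otherwise deleting
   the edge keeps ~P3 and decreases xi. *)
lemma half_edge_no_shorter_non_edge:
  assumes "E u0 v0" "\<And>a b. E a b \<Longrightarrow> dist_cw n a b \<le> dist_cw n u0 v0"
    and half: "2 * dist_cw n u0 v0 = n" and "non_edge n E w x"
  shows "dist_cw n u0 v0 \<le> dist_cw n w x"
proof (rule ccontr)
  assume shorter: "\<not> ?thesis"
  interpret longest_edge n E u0 v0 using assms by unfold_locales
  have "dist_cw n v0 u0 = dist_cw n u0 v0" using dist_cw_reverse[OF u0v0] half by simp
  then have "card (P3_set n E) \<le> card (P3_set n E_rem)" using removal_P3 by simp
  moreover have "xi n E_rem < xi n E" using removal_xi half assms(4) shorter by simp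
  ultimately show False using no_better(2)[OF removal_admissible] by simp
qed

(* If all edges are shorter than n/2, a shortest non-edge of length k <= n/4 is not shorter
   than the longest edge: otherwise adding it keeps ~P3 and decreases xi. *)
lemma longest_edge_le_shortest_non_edge:
  assumes "E u0 v0" "\<And>a b. E a b \<Longrightarrow> dist_cw n a b \<le> dist_cw n u0 v0"
    and "2 * dist_cw n u0 v0 < n"
    and "non_edge n E w x" "\<And>a b. non_edge n E a b \<Longrightarrow> dist_cw n w x \<le> dist_cw n a b"
    and "4 * dist_cw n w x \<le> n"
  shows "dist_cw n u0 v0 \<le> dist_cw n w x"
proof (rule ccontr)
  assume shorter: "\<not> ?thesis"
  interpret shortest_non_edge n E w x "dist_cw n w x" "dist_cw n u0 v0"
    using assms by unfold_locales auto
  have "xi n E_add < xi n E" using addition_xi assms(1) shorter by simp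
  then show False using no_better(2)[OF addition_admissible addition_P3] by simp
qed

(* Conversely, a shortest non-edge of length k <= n/4 is shorter than any bound L < n/2 on
   the edge lengths: if L <= k, adding a suitable shortest non-edge increases ~P3. *)
lemma shortest_non_edge_less_edge_bound:
  assumes edges_le: "\<And>a b. E a b \<Longrightarrow> dist_cw n a b \<le> L" and "2 * L < n"
    and "non_edge n E w x" "\<And>a b. non_edge n E a b \<Longrightarrow> dist_cw n w x \<le> dist_cw n a b"
    and "4 * dist_cw n w x \<le> n"
  shows "dist_cw n w x < L"
proof (rule ccontr)
  assume "\<not> ?thesis"
  then have long: "L \<le> dist_cw n w x" by simp
  obtain y y' where y: "non_edge n E y y'" "dist_cw n y y' = dist_cw n w x"
    and profitable: "2 \<le> dist_cw n w x \<or> in_nbrs y \<noteq> {}"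
  proof (cases "2 \<le> dist_cw n w x")
    case True
    then show ?thesis using that assms(3) by blast
  next
    case False
    then have k1: "dist_cw n w x = 1" using dist_cw_pos[of n w x] by linarith
    then have "\<And>a b. E a b \<Longrightarrow> dist_cw n a b \<le> 1" using edges_le long by (metis order_trans)
    then show ?thesis
      using unit_non_edge_with_in_nbr has_edge assms(3) k1 four that by fastforce
  qed
  interpret shortest_non_edge n E y y' "dist_cw n w x" L
    using assms y by unfold_locales auto
  have "card (P3_set n E) < card (P3_set n E_add)" using addition_P3_strict long profitable .
  then show False using no_better(1)[OF addition_admissible] by simp
qed

lemma shortest_non_edge_long:
  assumes "non_edge n E w x" "\<And>a b. non_edge n E a b \<Longrightarrow> dist_cw n w x \<le> dist_cw n a b"
  shows "n < 4 * dist_cw n w x"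
proof (rule ccontr)
  assume quarter: "\<not> ?thesis"
  obtain u0 v0 where longest: "E u0 v0" "\<And>a b. E a b \<Longrightarrow> dist_cw n a b \<le> dist_cw n u0 v0"
    using has_edge longest_edge_exists by blast
  have "2 * dist_cw n u0 v0 \<le> n" using longest_edge_at_most_half longest .
  then consider (half) "2 * dist_cw n u0 v0 = n" | (short) "2 * dist_cw n u0 v0 < n" by linarith
  then show False
  proof cases
    case half
    then have "dist_cw n u0 v0 \<le> dist_cw n w x"
      using half_edge_no_shorter_non_edge longest assms(1) by blast
    then show False using half quarter dist_cw_pos[of n w x] by linarith
  next
    case short
    then show False
      using longest_edge_le_shortest_non_edge[OF longest short assms]
        shortest_non_edge_less_edge_bound[OF longest(2) short assms] quarter by linarith
  qed
qed

end


theorem mainTheorem6: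
  fixes n :: nat and E :: "nat \<Rightarrow> nat \<Rightarrow> bool"
  assumes "n \<ge> 4" and "optimal n E"
  shows "ereal (real n / 4) < alphaG n E"
proof (cases "\<exists>u v. non_edge n E u v")
  case False
  then show ?thesis by (auto simp: alphaG_def)
next
  case True
  then obtain w x where shortest: "non_edge n E w x"
    "\<And>a b. non_edge n E a b \<Longrightarrow> dist_cw n w x \<le> dist_cw n a b"
    using shortest_non_edge_exists by blast
  interpret optimal_digraph n E using assms by unfold_locales
  have "n < 4 * dist_cw n w x" using shortest_non_edge_long shortest by blast
  then show ?thesis using alphaG_shortest[OF shortest] by simp
qed

end
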